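(* Consider the following TDCD process. Let $N\ge 1$ silos each contain $K\ge 1$ clients, let $D=D_1+\dots+D_N$, and write every $\theta\in\mathbb{R}^D$ in blocks $\theta=[\theta_{(1)}^T,\dots,\theta_{(N)}^T]^T$ with $\theta_{(j)}\in\mathbb{R}^{D_j}$. Fix an integer $Q\ge1$ and $\eta>0$. Client $k$ of silo $j$ holds $\theta^t_{k,j}\in\mathbb{R}^{D_j}$. Define $\tilde\theta^t_{(j)}=\frac1K\sum_k\theta^t_{k,j}$. At every multiple $t$ of $Q$, each $\theta^t_{k,j}$ is reset to $\tilde\theta^t_{(j)}$. Define $y^t_{k,j}\in\mathbb{R}^D$ by $(y^t_{k,j})_{(j)}=\theta^t_{k,j}$ and $(y^t_{k,j})_{(l)}=\tilde\theta^{t_0}_{(l)}$ for $l\ne j$, where $t_0$ is as defined below. The update is $\theta^{t+1}_{k,j}=\theta^t_{k,j}-\eta\, g_{k,j}(y^t_{k,j})$, where $g_{k,j}(\cdot)\in\mathbb{R}^{D_j}$ is the stochastic partial gradient computed by client $k$ of silo $j$ on the current minibatch. Let $t_0$ be the most recent iteration prior to iteration $t$ in which the hubs exchanged information and sent new models to the clients, i.e., the most recent synchronization iteration (with $t-t_0\le Q$). Then for every silo $j$, $$\frac1K\sum_{k=1}^K\|\tilde\theta^t_{(j)}-\theta^t_{k,j}\|^2\le\frac{Q\eta^2}{K}\sum_{k=1}^K\sum_{\tau=t_0}^{t-1}\|g_{k,j}(y^\tau_{k,j})\|^2.$$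
   Context: Here $\theta^t_{k,j}$ is the block-$j$ component of $y^t_{k,j}$; the paper denotes it $y^t_{k,j,(j)}$. *)

theory Defs
  imports Complex_Main
begin

text \<open>Clients are indexed by k < K, silos by j < N.
  A block vector in R^{D_j} is a function nat => real of which only the
  components i < D_j matter. A full vector theta in R^D is given blockwise as
  a function nat => (nat => real): block l, component i.
  A run of TDCD is a function w :: nat => nat => nat => nat => real,
  w t k j = value held by client k of silo j at iteration t, BEFORE the
  reset that takes place when t is a multiple of Q.\<close>

definition sqnorm :: "nat \<Rightarrow> (nat \<Rightarrow> real) \<Rightarrow> real" where
  "sqnorm d v = (\<Sum>i<d. (v i)\<^sup>2)"

definition cavg :: "nat \<Rightarrow> (nat \<Rightarrow> nat \<Rightarrow> nat \<Rightarrow> real) \<Rightarrow> nat \<Rightarrow> nat \<Rightarrow> real" where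
  "cavg K W j = (\<lambda>i. (1 / real K) * (\<Sum>k<K. W k j i))"

definition tdcd_state :: "nat \<Rightarrow> nat \<Rightarrow> (nat \<Rightarrow> nat \<Rightarrow> nat \<Rightarrow> nat \<Rightarrow> real)
    \<Rightarrow> nat \<Rightarrow> nat \<Rightarrow> nat \<Rightarrow> nat \<Rightarrow> real" where
  "tdcd_state Q K w t = (if Q dvd t then (\<lambda>k j. cavg K (w t) j) else w t)"

definition last_sync :: "nat \<Rightarrow> nat \<Rightarrow> nat" where
  "last_sync Q tau = Q * (tau div Q)"

definition tdcd_y :: "nat \<Rightarrow> nat \<Rightarrow> (nat \<Rightarrow> nat \<Rightarrow> nat \<Rightarrow> nat \<Rightarrow> real)
    \<Rightarrow> nat \<Rightarrow> nat \<Rightarrow> nat \<Rightarrow> nat \<Rightarrow> nat \<Rightarrow> real" where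
  "tdcd_y Q K w t k j = (\<lambda>l. if l = j then tdcd_state Q K w t k j
                            else cavg K (w (last_sync Q t)) l)"

end

theory Submission
  imports Defs "HOL-Analysis.Convex"
begin

text \<open>Between two synchronizations every client of silo j starts from the same silo
  average and subtracts eta times its own accumulated partial gradients, so the
  deviation of a client from the silo average is eta times the deviation of its
  accumulated gradient from the mean accumulated gradient. The spread around the mean
  is at most the second moment, and by Cauchy-Schwarz the square of a sum of at most
  Q gradients is at most Q times the sum of their squares.\<close>

lemma sqnorm_nonneg: "sqnorm d v \<ge> 0"
  by (simp add: sqnorm_def sum_nonneg)

lemma sqnorm_scale: "sqnorm d (\<lambda>i. c * v i) = c\<^sup>2 * sqnorm d v"
  by (simp add: sqnorm_def power_mult_distrib sum_distrib_left)

lemma sqnorm_sum_le: "sqnorm d (\<lambda>i. \<Sum>\<tau>\<in>T. v \<tau> i) \<le> real (card T) * (\<Sum>\<tau>\<in>T. sqnorm d (v \<tau>))"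
proof -
  have "sqnorm d (\<lambda>i. \<Sum>\<tau>\<in>T. v \<tau> i) \<le> (\<Sum>i<d. real (card T) * (\<Sum>\<tau>\<in>T. (v \<tau> i)\<^sup>2))"
    unfolding sqnorm_def
    by (intro sum_mono) (metis sum_squared_le_sum_of_squares mult.commute)
  also have "\<dots> = real (card T) * (\<Sum>\<tau>\<in>T. sqnorm d (v \<tau>))"
    by (simp add: sqnorm_def sum_distrib_left sum.swap[of _ T])
  finally show ?thesis .
qed

lemma sum_sq_dev_mean_le:
  fixes a :: "'a \<Rightarrow> real"
  shows "(\<Sum>k\<in>A. (a k - sum a A / card A)\<^sup>2) \<le> (\<Sum>k\<in>A. (a k)\<^sup>2)"
proof (cases "finite A \<and> A \<noteq> {}")
  case True
  define m where "m = sum a A / card A"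
  have sum_eq: "sum a A = card A * m"
    using True by (simp add: m_def)
  have "(\<Sum>k\<in>A. (a k - m)\<^sup>2) = (\<Sum>k\<in>A. (a k)\<^sup>2 - 2 * m * a k + m\<^sup>2)"
    by (rule sum.cong) (simp_all add: power2_diff)
  also have "\<dots> = (\<Sum>k\<in>A. (a k)\<^sup>2) - 2 * m * sum a A + card A * m\<^sup>2"
    by (simp add: sum.distrib sum_subtractf sum_distrib_left)
  also have "\<dots> = (\<Sum>k\<in>A. (a k)\<^sup>2) - card A * m\<^sup>2"
    by (simp add: sum_eq power2_eq_square)
  finally show ?thesis
    by (simp add: m_def)
qed auto

lemma sum_sqnorm_cavg_dev_le:
  assumes affine: "\<And>k. k < K \<Longrightarrow> W k j = (\<lambda>i. c i - \<eta> * a k i)"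
  shows "(\<Sum>k<K. sqnorm d (\<lambda>i. cavg K W j i - W k j i)) \<le> \<eta>\<^sup>2 * (\<Sum>k<K. sqnorm d (a k))"
proof -
  define m where "m i = (\<Sum>l<K. a l i) / real K" for i
  have dev: "cavg K W j i - W k j i = \<eta> * (a k i - m i)" if "k < K" for k i
  proof -
    have "cavg K W j i = (\<Sum>l<K. c i - \<eta> * a l i) / real K"
      by (simp add: cavg_def affine)
    also have "\<dots> = c i - \<eta> * m i"
      using that by (simp add: m_def sum_subtractf sum_distrib_left field_simps)
    finally show ?thesis
      using affine[OF that] by (simp add: algebra_simps)
  qed
  have "(\<Sum>k<K. sqnorm d (\<lambda>i. cavg K W j i - W k j i)) = \<eta>\<^sup>2 * (\<Sum>k<K. sqnorm d (\<lambda>i. a k i - m i))"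
    by (simp add: dev sqnorm_scale sum_distrib_left)
  also have "(\<Sum>k<K. sqnorm d (\<lambda>i. a k i - m i)) = (\<Sum>i<d. \<Sum>k<K. (a k i - m i)\<^sup>2)"
    unfolding sqnorm_def by (rule sum.swap)
  also have "\<dots> \<le> (\<Sum>i<d. \<Sum>k<K. (a k i)\<^sup>2)"
    using sum_sq_dev_mean_le[of "\<lambda>k. a k _" "{..<K}"]
    by (intro sum_mono[where K = "{..<d}"]) (simp add: m_def)
  also have "\<dots> = (\<Sum>k<K. sqnorm d (a k))"
    unfolding sqnorm_def by (rule sum.swap)
  finally show ?thesis
    by (simp add: mult_left_mono)
qed

lemma not_dvd_between_multiples:
  fixes Q :: nat
  assumes "Q dvd t0" and "t0 < s" and "s < t0 + Q"
  shows "\<not> Q dvd s"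
proof
  assume "Q dvd s"
  with \<open>Q dvd t0\<close> have "Q dvd s - t0"
    by (simp add: dvd_diff_nat)
  with assms(2,3) show False
    by (auto dest: dvd_imp_le)
qed

lemma last_sync_bounds:
  assumes "Q > 0"
  shows "Q dvd last_sync Q s" and "last_sync Q s \<le> s" and "s < last_sync Q s + Q"
proof -
  show "Q dvd last_sync Q s" and "last_sync Q s \<le> s"
    by (simp_all add: last_sync_def minus_mod_eq_mult_div[symmetric])
  have "s = last_sync Q s + s mod Q"
    by (simp add: last_sync_def)
  with \<open>Q > 0\<close> show "s < last_sync Q s + Q"
    using mod_less_divisor[of Q s] by linarith
qed

lemma tdcd_local_iterate:
  assumes update: "\<And>\<tau>. w (Suc \<tau>) k j = (\<lambda>i. tdcd_state Q K w \<tau> k j i - \<eta> * G \<tau> i)"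
    and "Q dvd t0" and "t0 < t" and "t \<le> t0 + Q"
  shows "w t k j = (\<lambda>i. cavg K (w t0) j i - \<eta> * (\<Sum>\<tau>=t0..<t. G \<tau> i))"
  using Suc_leI[OF \<open>t0 < t\<close>] \<open>t \<le> t0 + Q\<close>
proof (induction t rule: dec_induct)
  case base
  then show ?case
    using update[of t0] \<open>Q dvd t0\<close> by (simp add: tdcd_state_def)
next
  case (step s)
  have "\<not> Q dvd s"
    using not_dvd_between_multiples[OF \<open>Q dvd t0\<close>] step by simp
  then have "w (Suc s) k j = (\<lambda>i. w s k j i - \<eta> * G s i)"
    using update[of s] by (simp add: tdcd_state_def)
  with step show ?case
    by (simp add: algebra_simps)
qed

theorem lemma5:
  fixes N K Q t t0 j :: nat and D :: "nat \<Rightarrow> nat" and \<eta> :: real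
    and w :: "nat \<Rightarrow> nat \<Rightarrow> nat \<Rightarrow> nat \<Rightarrow> real"
    and g :: "nat \<Rightarrow> nat \<Rightarrow> nat \<Rightarrow> (nat \<Rightarrow> nat \<Rightarrow> real) \<Rightarrow> nat \<Rightarrow> real"
  assumes "N \<ge> 1" and "K \<ge> 1" and "Q \<ge> 1" and "\<eta> > 0"
    and update: "\<And>\<tau> k l. k < K \<Longrightarrow> l < N \<Longrightarrow>
       w (Suc \<tau>) k l = (\<lambda>i. tdcd_state Q K w \<tau> k l i - \<eta> * g \<tau> k l (tdcd_y Q K w \<tau> k l) i)"
    and "j < N" and "t \<ge> 1" and "t0 = Q * ((t - 1) div Q)"
  shows "(1 / real K) * (\<Sum>k<K. sqnorm (D j) (\<lambda>i. cavg K (w t) j i - w t k j i))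
     \<le> (real Q * \<eta>\<^sup>2 / real K) *
        (\<Sum>k<K. \<Sum>\<tau>=t0..<t. sqnorm (D j) (g \<tau> k j (tdcd_y Q K w \<tau> k j)))"
proof -
  define G where "G \<tau> k = g \<tau> k j (tdcd_y Q K w \<tau> k j)" for \<tau> k
  have "t0 = last_sync Q (t - 1)"
    using \<open>t0 = Q * ((t - 1) div Q)\<close> by (simp add: last_sync_def)
  with \<open>Q \<ge> 1\<close> \<open>t \<ge> 1\<close> have "Q dvd t0" and "t0 < t" and "t \<le> t0 + Q"
    using last_sync_bounds[of Q "t - 1"] by auto
  then have "w t k j = (\<lambda>i. cavg K (w t0) j i - \<eta> * (\<Sum>\<tau>=t0..<t. G \<tau> k i))" if "k < K" for k
    using update[OF that \<open>j < N\<close>] by (intro tdcd_local_iterate) (simp_all add: G_def)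
  then have "(\<Sum>k<K. sqnorm (D j) (\<lambda>i. cavg K (w t) j i - w t k j i))
      \<le> \<eta>\<^sup>2 * (\<Sum>k<K. sqnorm (D j) (\<lambda>i. \<Sum>\<tau>=t0..<t. G \<tau> k i))"
    by (rule sum_sqnorm_cavg_dev_le)
  also have "\<dots> \<le> \<eta>\<^sup>2 * (\<Sum>k<K. real Q * (\<Sum>\<tau>=t0..<t. sqnorm (D j) (G \<tau> k)))"
  proof (intro mult_left_mono sum_mono)
    fix k
    have "real (card {t0..<t}) \<le> real Q"
      using \<open>t \<le> t0 + Q\<close> by simp
    then show "sqnorm (D j) (\<lambda>i. \<Sum>\<tau>=t0..<t. G \<tau> k i) \<le> real Q * (\<Sum>\<tau>=t0..<t. sqnorm (D j) (G \<tau> k))"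
      using sqnorm_sum_le[of "D j" "\<lambda>\<tau>. G \<tau> k" "{t0..<t}"]
      by (meson order_trans mult_right_mono sum_nonneg sqnorm_nonneg)
  qed simp
  also have "\<dots> = real Q * \<eta>\<^sup>2 * (\<Sum>k<K. \<Sum>\<tau>=t0..<t. sqnorm (D j) (G \<tau> k))"
    by (simp add: sum_distrib_left mult_ac)
  finally show ?thesis
    using divide_right_mono[of _ _ "real K"] by (simp add: G_def)
qed

end
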